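(* Let $1\le k\le n+1$ and $\underline d=(d_1,\dots,d_k)$ with $2\le d_1\le\dots\le d_k$. Then $N(\underline d,n)>1$ unless $\underline d=(2)$.
   Context: For a homogeneous complex polynomial $f$ in $x_0,\dots,x_n$ and $x\in\mathbb C^{n+1}$ write $df|_x=(\partial f/\partial x_0(x),\dots,\partial f/\partial x_n(x))^T$. Let $\Pi_{\underline d,n}$ be the space of $k$-tuples of homogeneous complex polynomials in $x_0,\dots,x_n$ of degrees $d_1,\dots,d_k$, and $\Sigma_{\underline d,n}$ the set of tuples for which there is $x\in\mathbb C^{n+1}\setminus\{0\}$ with all $f_i(x)=0$ and the gradients $df_i|_x$ linearly dependent. Let $\mathbf W_{k,n}=\{(A,x)\in\mathrm{Mat}_{n+1,k}(\mathbb C)\times\mathbb C^{n+1}:\operatorname{rk}A<k,\ x^TA=0\}$. For $(f^0_1,\dots,f^0_k)\in\Pi_{\underline d,n}\setminus\Sigma_{\underline d,n}$ let $F(x)=(df^0_1|_x,\dots,df^0_k|_x,x)$; then $F^{-1}(\mathbf W_{k,n})=\{0\}$ and $N(\underline d,n)$ is the intersection multiplicity of $F(\mathbb C^{n+1})$ and $\mathbf W_{k,n}$ at $0$, equivalently $\dim_{\mathbb C}\mathbb C[x_0,\dots,x_n]/F^*(I(\mathbf W_{k,n}))$; it is independent of the choice of $(f^0_i)$. *)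

theory Defs
  imports Complex_Main "HOL-Library.Poly_Mapping" "HOL-Library.Extended_Nat"
begin

text \<open>Multivariate complex polynomials in variables indexed by type 'v:
  finitely supported maps from monomials (exponent vectors 'v =>0 nat) to coefficients.\<close>

type_synonym 'v mpoly = "('v \<Rightarrow>\<^sub>0 nat) \<Rightarrow>\<^sub>0 complex"

definition mconst :: "complex \<Rightarrow> 'v mpoly" where
  "mconst c = Poly_Mapping.single 0 c"

definition mvar :: "'v \<Rightarrow> 'v mpoly" where
  "mvar i = Poly_Mapping.single (Poly_Mapping.single i 1) 1"

definition mvars :: "'v mpoly \<Rightarrow> 'v set" where
  "mvars p = (\<Union>m\<in>Poly_Mapping.keys p. Poly_Mapping.keys (m :: 'v \<Rightarrow>\<^sub>0 nat))"

definition mon_deg :: "('v \<Rightarrow>\<^sub>0 nat) \<Rightarrow> nat" where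
  "mon_deg m = (\<Sum>i\<in>Poly_Mapping.keys m. Poly_Mapping.lookup m i)"

definition homogeneous :: "nat \<Rightarrow> 'v mpoly \<Rightarrow> bool" where
  "homogeneous d p \<longleftrightarrow> (\<forall>m\<in>Poly_Mapping.keys p. mon_deg m = d)"

definition meval :: "('v \<Rightarrow> complex) \<Rightarrow> 'v mpoly \<Rightarrow> complex" where
  "meval a p = (\<Sum>m\<in>Poly_Mapping.keys p. Poly_Mapping.lookup p m * (\<Prod>i\<in>Poly_Mapping.keys m. a i ^ Poly_Mapping.lookup m i))"

definition msubst :: "('v \<Rightarrow> 'w mpoly) \<Rightarrow> 'v mpoly \<Rightarrow> 'w mpoly" where
  "msubst \<sigma> p = (\<Sum>m\<in>Poly_Mapping.keys p. mconst (Poly_Mapping.lookup p m) * (\<Prod>i\<in>Poly_Mapping.keys m. \<sigma> i ^ Poly_Mapping.lookup m i))"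

definition mpderiv :: "'v \<Rightarrow> 'v mpoly \<Rightarrow> 'v mpoly" where
  "mpderiv i p = (\<Sum>m\<in>Poly_Mapping.keys p.
     Poly_Mapping.single (m - Poly_Mapping.single i 1) (of_nat (Poly_Mapping.lookup m i) * Poly_Mapping.lookup p m))"

definition polyring :: "'v set \<Rightarrow> 'v mpoly set" where
  "polyring V = {p. mvars p \<subseteq> V}"

definition gen_ideal :: "'v set \<Rightarrow> 'v mpoly set \<Rightarrow> 'v mpoly set" where
  "gen_ideal V G = {q. \<exists>S c. finite S \<and> S \<subseteq> G \<and> (\<forall>g\<in>S. c g \<in> polyring V)
                          \<and> q = (\<Sum>g\<in>S. c g * g)}"

text \<open>Dimension over C of the quotient C[x_v | v in V] / J: the least size of a finite
  subset B of the ring whose C-span together with J is the whole ring (infinity if none).\<close>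
definition spans_mod :: "'v set \<Rightarrow> 'v mpoly set \<Rightarrow> 'v mpoly set \<Rightarrow> bool" where
  "spans_mod V J B \<longleftrightarrow> (\<forall>p\<in>polyring V. \<exists>c. p - (\<Sum>b\<in>B. mconst (c b) * b) \<in> J)"

definition quot_dim :: "'v set \<Rightarrow> 'v mpoly set \<Rightarrow> enat" where
  "quot_dim V J =
     (if \<exists>B. finite B \<and> B \<subseteq> polyring V \<and> spans_mod V J B
      then enat (LEAST n. \<exists>B. finite B \<and> B \<subseteq> polyring V \<and> spans_mod V J B \<and> card B = n)
      else \<infinity>)"

text \<open>Coordinates on Mat_{n+1,k}(C) x C^{n+1}: Inl (i,j) is the matrix entry A_{ij}
  (0 <= i <= n, 0 <= j < k), Inr i is the coordinate x_i (0 <= i <= n).\<close>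
definition W_vars :: "nat \<Rightarrow> nat \<Rightarrow> ((nat \<times> nat) + nat) set" where
  "W_vars k n = Inl ` ({..n} \<times> {..<k}) \<union> Inr ` {..n}"

text \<open>The variety W_{k,n} = {(A,x) : rk A < k, x^T A = 0}; rk A < k means that the k
  columns of A are linearly dependent.\<close>
definition in_W :: "nat \<Rightarrow> nat \<Rightarrow> ((nat \<times> nat) + nat \<Rightarrow> complex) \<Rightarrow> bool" where
  "in_W k n a \<longleftrightarrow>
     (\<exists>c :: nat \<Rightarrow> complex. (\<exists>j<k. c j \<noteq> 0) \<and>
        (\<forall>i\<le>n. (\<Sum>j<k. a (Inl (i, j)) * c j) = 0)) \<and>
     (\<forall>j<k. (\<Sum>i\<le>n. a (Inr i) * a (Inl (i, j))) = 0)"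

definition I_W :: "nat \<Rightarrow> nat \<Rightarrow> ((nat \<times> nat) + nat) mpoly set" where
  "I_W k n = {p \<in> polyring (W_vars k n). \<forall>a. in_W k n a \<longrightarrow> meval a p = 0}"

text \<open>The map F(x) = (df_1|_x, ..., df_k|_x, x) as a polynomial map: column j of the
  matrix is the gradient of f_j.\<close>
definition F_map :: "(nat \<Rightarrow> nat mpoly) \<Rightarrow> (nat \<times> nat) + nat \<Rightarrow> nat mpoly" where
  "F_map f v = (case v of Inl (i, j) \<Rightarrow> mpderiv i (f j) | Inr i \<Rightarrow> mvar i)"

definition in_Pi :: "nat \<Rightarrow> (nat \<Rightarrow> nat) \<Rightarrow> nat \<Rightarrow> (nat \<Rightarrow> nat mpoly) \<Rightarrow> bool" where
  "in_Pi k d n f \<longleftrightarrow> (\<forall>j<k. f j \<in> polyring {..n} \<and> homogeneous (d j) (f j))"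

definition in_Sigma :: "nat \<Rightarrow> nat \<Rightarrow> (nat \<Rightarrow> nat mpoly) \<Rightarrow> bool" where
  "in_Sigma k n f \<longleftrightarrow>
     (\<exists>x :: nat \<Rightarrow> complex. (\<exists>i\<le>n. x i \<noteq> 0) \<and> (\<forall>j<k. meval x (f j) = 0) \<and>
        (\<exists>c :: nat \<Rightarrow> complex. (\<exists>j<k. c j \<noteq> 0) \<and>
           (\<forall>i\<le>n. (\<Sum>j<k. c j * meval x (mpderiv i (f j))) = 0)))"

definition mult_N :: "nat \<Rightarrow> nat \<Rightarrow> (nat \<Rightarrow> nat mpoly) \<Rightarrow> enat" where
  "mult_N k n f = quot_dim {..n} (gen_ideal {..n} (msubst (F_map f) ` I_W k n))"

end

theory Submission
  imports Defs "HOL-Computational_Algebra.Polynomial"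
begin

text \<open>Every polynomial in \<open>I(W\<^sub>k\<^sub>,\<^sub>n)\<close> vanishes on the coordinate axes of the \<open>x\<close>-space and,
  for \<open>k \<ge> 2\<close>, of the matrix space, as these axes lie in \<open>W\<^sub>k\<^sub>,\<^sub>n\<close>. So it has no constant term,
  and it has linear terms only if \<open>k = 1\<close>, and then only in the matrix entries. The components of
  \<open>F\<close> vanish at the origin, and for \<open>k = 1\<close> its matrix components \<open>\<partial>f\<^sub>1/\<partial>x\<^sub>i\<close> vanish to order
  \<open>d\<^sub>1 - 1 \<ge> 2\<close> since \<open>d\<^sub>1 \<noteq> 2\<close>. Hence \<open>F\<^sup>*(I(W\<^sub>k\<^sub>,\<^sub>n))\<close> lies in the square of the maximal ideal at
  the origin, modulo which \<open>1\<close> and \<open>x\<^sub>0\<close> are linearly independent, so \<open>N(d,n) \<ge> 2\<close>.\<close>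

lemma single_eq_zero_iff [simp]: "Poly_Mapping.single k c = 0 \<longleftrightarrow> c = 0"
  by (metis lookup_single_eq lookup_zero single_zero)

lemma mon_deg_eq_sum_superset:
  assumes "finite S" "Poly_Mapping.keys m \<subseteq> S"
  shows "mon_deg m = (\<Sum>i\<in>S. Poly_Mapping.lookup m i)"
  unfolding mon_deg_def
  by (rule sum.mono_neutral_left) (use assms in \<open>auto simp: in_keys_iff\<close>)

lemma mon_deg_add: "mon_deg (a + b) = mon_deg a + mon_deg b"
proof -
  let ?S = "Poly_Mapping.keys a \<union> Poly_Mapping.keys b"
  have "mon_deg (a + b) = (\<Sum>i\<in>?S. Poly_Mapping.lookup (a + b) i)"
    by (rule mon_deg_eq_sum_superset) (use keys_add[of a b] in auto)
  also have "\<dots> = (\<Sum>i\<in>?S. Poly_Mapping.lookup a i) + (\<Sum>i\<in>?S. Poly_Mapping.lookup b i)"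
    by (simp add: lookup_add sum.distrib)
  also have "\<dots> = mon_deg a + mon_deg b"
    by (simp add: mon_deg_eq_sum_superset[symmetric])
  finally show ?thesis .
qed

lemma mon_deg_zero [simp]: "mon_deg 0 = 0"
  by (simp add: mon_deg_def)

lemma mon_deg_single [simp]: "mon_deg (Poly_Mapping.single w e) = e"
  by (subst mon_deg_eq_sum_superset[of "{w}"]) auto

lemma single_mon_deg_if_keys_subset:
  assumes "Poly_Mapping.keys m \<subseteq> {w}"
  shows "m = Poly_Mapping.single w (mon_deg m)"
proof -
  have "mon_deg m = Poly_Mapping.lookup m w"
    using mon_deg_eq_sum_superset[of "{w}" m] assms by simp
  then show ?thesis
    using assms by (intro poly_mapping_eqI) (auto simp: lookup_single when_def in_keys_iff)
qed

lemma mon_deg_le_1_cases: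
  assumes "mon_deg m \<le> 1"
  obtains "m = 0" | v where "m = Poly_Mapping.single v 1"
proof -
  have "\<exists>w. Poly_Mapping.keys m \<subseteq> {w}"
  proof (rule ccontr)
    assume "\<nexists>w. Poly_Mapping.keys m \<subseteq> {w}"
    then obtain u v where uv: "u \<in> Poly_Mapping.keys m" "v \<in> Poly_Mapping.keys m" "u \<noteq> v"
      by blast
    have "(\<Sum>i\<in>{u, v}. Poly_Mapping.lookup m i) \<le> mon_deg m"
      unfolding mon_deg_def by (rule sum_mono2) (use uv in auto)
    moreover have "Poly_Mapping.lookup m u \<ge> 1" "Poly_Mapping.lookup m v \<ge> 1"
      using uv by (auto simp: in_keys_iff)
    ultimately show False
      using uv assms by simp
  qed
  then obtain w where "Poly_Mapping.keys m \<subseteq> {w}"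
    by blast
  from single_mon_deg_if_keys_subset[OF this] assms that show ?thesis
    by (cases "mon_deg m") auto
qed

lemma lookup_mconst_mult: "Poly_Mapping.lookup (mconst c * p) m = c * Poly_Mapping.lookup p m"
  unfolding mconst_def
  by (simp add: mult_map_scale_conv_mult[symmetric] map.rep_eq when_def)

lemma lookup_mconst: "Poly_Mapping.lookup (mconst c) m = (if m = 0 then c else 0)"
  by (simp add: mconst_def lookup_single when_def)

lemma mvars_mconst [simp]: "mvars (mconst c) = {}"
  by (simp add: mconst_def mvars_def)

lemma mvars_mvar [simp]: "mvars (mvar i) = {i}"
  by (simp add: mvar_def mvars_def)

lemma mem_mvars_if_linear_coeff_nonzero:
  "Poly_Mapping.lookup p (Poly_Mapping.single v 1) \<noteq> 0 \<Longrightarrow> v \<in> mvars p"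
  by (force simp: mvars_def in_keys_iff)

definition vanishes_to_order :: "nat \<Rightarrow> 'v mpoly \<Rightarrow> bool" where
  "vanishes_to_order e q \<longleftrightarrow> (\<forall>m\<in>Poly_Mapping.keys q. e \<le> mon_deg m)"

lemma vanishes_to_order_mono: "vanishes_to_order e q \<Longrightarrow> e' \<le> e \<Longrightarrow> vanishes_to_order e' q"
  by (auto simp: vanishes_to_order_def)

lemma vanishes_to_order_0 [simp]: "vanishes_to_order 0 q"
  by (simp add: vanishes_to_order_def)

lemma vanishes_to_order_zero [simp]: "vanishes_to_order e 0"
  by (simp add: vanishes_to_order_def)

lemma lookup_eq_0_if_vanishes_to_order:
  "vanishes_to_order e q \<Longrightarrow> mon_deg m < e \<Longrightarrow> Poly_Mapping.lookup q m = 0"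
  by (meson in_keys_iff leD vanishes_to_order_def)

lemma vanishes_to_order_add:
  "vanishes_to_order e p \<Longrightarrow> vanishes_to_order e q \<Longrightarrow> vanishes_to_order e (p + q)"
  using keys_add[of p q] by (auto simp: vanishes_to_order_def)

lemma vanishes_to_order_mult:
  "vanishes_to_order a p \<Longrightarrow> vanishes_to_order b q \<Longrightarrow> vanishes_to_order (a + b) (p * q)"
  using keys_mult[of p q] by (fastforce simp: vanishes_to_order_def mon_deg_add intro: add_mono)

lemma vanishes_to_order_mult_left: "vanishes_to_order e q \<Longrightarrow> vanishes_to_order e (p * q)"
  using vanishes_to_order_mult[OF vanishes_to_order_0] by fastforce

lemma vanishes_to_order_sum:
  "(\<And>x. x \<in> A \<Longrightarrow> vanishes_to_order e (g x)) \<Longrightarrow> vanishes_to_order e (\<Sum>x\<in>A. g x)"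
  by (induction A rule: infinite_finite_induct) (auto intro: vanishes_to_order_add)

lemma vanishes_to_order_power: "vanishes_to_order e p \<Longrightarrow> vanishes_to_order (e * n) (p ^ n)"
  by (induction n) (auto dest: vanishes_to_order_mult)

lemma vanishes_to_order_prod:
  "(\<And>x. x \<in> A \<Longrightarrow> vanishes_to_order (g x) (P x)) \<Longrightarrow>
    vanishes_to_order (\<Sum>x\<in>A. g x) (\<Prod>x\<in>A. P x)"
  by (induction A rule: infinite_finite_induct) (auto intro: vanishes_to_order_mult)

lemma vanishes_to_order_mvar: "vanishes_to_order 1 (mvar i)"
  by (simp add: vanishes_to_order_def mvar_def)

lemma vanishes_to_order_mpderiv:
  assumes "homogeneous d p"
  shows "vanishes_to_order (d - 1) (mpderiv i p)"
  unfolding mpderiv_def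
proof (rule vanishes_to_order_sum)
  fix m
  assume m: "m \<in> Poly_Mapping.keys p"
  show "vanishes_to_order (d - 1) (Poly_Mapping.single (m - Poly_Mapping.single i 1)
          (of_nat (Poly_Mapping.lookup m i) * Poly_Mapping.lookup p m))"
  proof (cases "Poly_Mapping.lookup m i = 0")
    case False
    then have "m = (m - Poly_Mapping.single i 1) + Poly_Mapping.single i 1"
      by (intro poly_mapping_eqI) (auto simp: lookup_add lookup_minus lookup_single when_def)
    then have "mon_deg m = mon_deg (m - Poly_Mapping.single i 1) + 1"
      by (metis mon_deg_add mon_deg_single)
    moreover have "mon_deg m = d"
      using assms m by (auto simp: homogeneous_def)
    ultimately show ?thesis
      by (auto simp: vanishes_to_order_def)
  qed simp
qed

lemma vanishes_to_order_2_msubst: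
  assumes const: "Poly_Mapping.lookup p 0 = 0"
    and order_1: "\<And>v. v \<in> mvars p \<Longrightarrow> vanishes_to_order 1 (\<sigma> v)"
    and linear: "\<And>v. Poly_Mapping.lookup p (Poly_Mapping.single v 1) \<noteq> 0 \<Longrightarrow>
                      vanishes_to_order 2 (\<sigma> v)"
  shows "vanishes_to_order 2 (msubst \<sigma> p)"
  unfolding msubst_def
proof (intro vanishes_to_order_sum vanishes_to_order_mult_left)
  fix m
  assume m: "m \<in> Poly_Mapping.keys p"
  then have coeff: "Poly_Mapping.lookup p m \<noteq> 0"
    by (simp add: in_keys_iff)
  show "vanishes_to_order 2 (\<Prod>v\<in>Poly_Mapping.keys m. \<sigma> v ^ Poly_Mapping.lookup m v)"
  proof (cases "mon_deg m \<le> 1")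
    case False
    have "vanishes_to_order (\<Sum>v\<in>Poly_Mapping.keys m. 1 * Poly_Mapping.lookup m v)
            (\<Prod>v\<in>Poly_Mapping.keys m. \<sigma> v ^ Poly_Mapping.lookup m v)"
      using m by (intro vanishes_to_order_prod vanishes_to_order_power order_1)
        (auto simp: mvars_def)
    then show ?thesis
      using False by (auto simp: mon_deg_def intro: vanishes_to_order_mono)
  next
    case True
    then show ?thesis
    proof (cases rule: mon_deg_le_1_cases)
      case 1
      then show ?thesis
        using coeff const by simp
    next
      case (2 v)
      then show ?thesis
        using coeff linear[of v] by simp
    qed
  qed
qed

lemma vanishes_to_order_gen_ideal:
  assumes "\<And>g. g \<in> G \<Longrightarrow> vanishes_to_order e g" and "q \<in> gen_ideal V G"
  shows "vanishes_to_order e q"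
proof -
  obtain S c where "S \<subseteq> G" "q = (\<Sum>g\<in>S. c g * g)"
    using assms(2) by (auto simp: gen_ideal_def)
  then show ?thesis
    using assms(1) by (auto intro!: vanishes_to_order_sum vanishes_to_order_mult_left)
qed

lemma eq_single_iff_keys_subset_mon_deg:
  "m = Poly_Mapping.single w e \<longleftrightarrow> Poly_Mapping.keys m \<subseteq> {w} \<and> mon_deg m = e"
  using single_mon_deg_if_keys_subset[of m w] by (auto split: if_splits)

lemma eval_monomial_on_axis:
  fixes t :: complex
  shows "(\<Prod>i\<in>Poly_Mapping.keys m. (if i = w then t else 0) ^ Poly_Mapping.lookup m i)
    = (if Poly_Mapping.keys m \<subseteq> {w} then t ^ mon_deg m else 0)"
proof (cases "Poly_Mapping.keys m \<subseteq> {w}")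
  case True
  then have "(\<Prod>i\<in>Poly_Mapping.keys m. (if i = w then t else 0) ^ Poly_Mapping.lookup m i)
     = (\<Prod>i\<in>Poly_Mapping.keys m. t ^ Poly_Mapping.lookup m i)"
    by (intro prod.cong) auto
  also have "\<dots> = t ^ mon_deg m"
    by (simp add: mon_deg_def power_sum)
  finally show ?thesis
    using True by simp
next
  case False
  then obtain i where "i \<in> Poly_Mapping.keys m" "i \<noteq> w"
    by blast
  then show ?thesis
    using False by (subst prod_zero) (auto simp: in_keys_iff intro!: bexI[of _ i])
qed

text \<open>Coefficients of pure powers are read off from the restriction of \<open>p\<close> to a
  coordinate axis, which is a univariate polynomial.\<close>

lemma lookup_pure_power_eq_0_if_vanishes_on_axis:
  fixes p :: "'v mpoly"
  assumes "\<And>t. meval (\<lambda>v. if v = w then t else 0) p = 0"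
  shows "Poly_Mapping.lookup p (Poly_Mapping.single w e) = 0"
proof -
  define P where "P = (\<Sum>m\<in>Poly_Mapping.keys p.
     monom (if Poly_Mapping.keys m \<subseteq> {w} then Poly_Mapping.lookup p m else 0) (mon_deg m))"
  have "poly P t = meval (\<lambda>v. if v = w then t else 0) p" for t
    unfolding P_def meval_def poly_sum poly_monom eval_monomial_on_axis
    by (intro sum.cong) auto
  then have "P = 0"
    using assms poly_all_0_iff_0 by auto
  then have "0 = coeff P e"
    by simp
  also have "\<dots> = (\<Sum>m\<in>Poly_Mapping.keys p.
      (if m = Poly_Mapping.single w e then Poly_Mapping.lookup p m else 0))"
    unfolding P_def coeff_sum coeff_monom eq_single_iff_keys_subset_mon_deg
    by (intro sum.cong) auto
  also have "\<dots> = Poly_Mapping.lookup p (Poly_Mapping.single w e)"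
    by (simp add: sum.delta in_keys_iff)
  finally show ?thesis
    by simp
qed

lemma in_W_Inr_axis:
  assumes "1 \<le> k"
  shows "in_W k n (\<lambda>v. if v = Inr i then t else 0)"
  unfolding in_W_def
  using assms by (auto intro!: exI[of _ "\<lambda>_. 1"] exI[of _ 0])

lemma in_W_Inl_axis:
  assumes "2 \<le> k" "j < k"
  shows "in_W k n (\<lambda>v. if v = Inl (i, j) then t else 0)"
proof -
  define j' where "j' = (if j = 0 then 1 else (0::nat))"
  have "j' < k" "j' \<noteq> j"
    using assms by (auto simp: j'_def)
  then show ?thesis
    unfolding in_W_def
    by (auto intro!: exI[of _ "\<lambda>l. if l = j' then 1 else 0"] sum.neutral)
qed

lemma W_vars_cases:
  assumes "v \<in> W_vars k n"
  obtains i where "v = Inr i" | i j where "v = Inl (i, j)" "j < k"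
  using assms unfolding W_vars_def by blast

lemma I_W_vanishes: "p \<in> I_W k n \<Longrightarrow> in_W k n a \<Longrightarrow> meval a p = 0"
  by (simp add: I_W_def)

lemma I_W_lookup_const:
  assumes "1 \<le> k" "p \<in> I_W k n"
  shows "Poly_Mapping.lookup p 0 = 0"
  using lookup_pure_power_eq_0_if_vanishes_on_axis[of "Inr 0" p 0]
    I_W_vanishes[OF assms(2) in_W_Inr_axis[OF assms(1)]] by simp

lemma I_W_lookup_linear:
  assumes "1 \<le> k" "p \<in> I_W k n" and "Poly_Mapping.lookup p (Poly_Mapping.single v 1) \<noteq> 0"
  obtains i j where "k = 1" "v = Inl (i, j)" "j < k"
proof -
  have "mvars p \<subseteq> W_vars k n"
    using assms(2) by (simp add: I_W_def polyring_def)
  then have "v \<in> W_vars k n"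
    using mem_mvars_if_linear_coeff_nonzero[OF assms(3)] by blast
  then show ?thesis
  proof (cases rule: W_vars_cases)
    case (1 i)
    have "Poly_Mapping.lookup p (Poly_Mapping.single v 1) = 0"
      unfolding 1 using I_W_vanishes[OF assms(2) in_W_Inr_axis[OF assms(1)]]
      by (rule lookup_pure_power_eq_0_if_vanishes_on_axis)
    with assms(3) show ?thesis
      by contradiction
  next
    case (2 i j)
    have "k = 1"
    proof (rule ccontr)
      assume "k \<noteq> 1"
      with assms(1) have "2 \<le> k"
        by simp
      have "Poly_Mapping.lookup p (Poly_Mapping.single v 1) = 0"
        unfolding 2(1) using I_W_vanishes[OF assms(2) in_W_Inl_axis[OF \<open>2 \<le> k\<close> 2(2)]]
        by (rule lookup_pure_power_eq_0_if_vanishes_on_axis)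
      with assms(3) show False
        by contradiction
    qed
    with 2 show ?thesis
      by (intro that)
  qed
qed

lemma vanishes_to_order_F_map:
  assumes "in_Pi k d n f" "\<forall>j<k. 2 \<le> d j" and "v \<in> W_vars k n"
  shows "vanishes_to_order 1 (F_map f v)"
  using assms(3)
proof (cases rule: W_vars_cases)
  case (1 i)
  then show ?thesis
    using vanishes_to_order_mvar[of i] by (simp add: F_map_def)
next
  case (2 i j)
  then have "vanishes_to_order (d j - 1) (mpderiv i (f j))"
    using assms(1) by (intro vanishes_to_order_mpderiv) (auto simp: in_Pi_def)
  moreover have "1 \<le> d j - 1"
    using 2 assms(2) by force
  ultimately show ?thesis
    using 2 by (auto simp: F_map_def intro: vanishes_to_order_mono)
qed

lemma vanishes_to_order_2_pullback_I_W:
  assumes "1 \<le> k" "in_Pi k d n f" "\<forall>j<k. 2 \<le> d j" "\<not> (k = 1 \<and> d 0 = 2)"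
    and "p \<in> I_W k n"
  shows "vanishes_to_order 2 (msubst (F_map f) p)"
proof (rule vanishes_to_order_2_msubst)
  show "Poly_Mapping.lookup p 0 = 0"
    using I_W_lookup_const assms(1,5) .
  show "vanishes_to_order 1 (F_map f v)" if "v \<in> mvars p" for v
    using that assms(2,3,5) by (intro vanishes_to_order_F_map) (auto simp: I_W_def polyring_def)
  show "vanishes_to_order 2 (F_map f v)"
    if linear: "Poly_Mapping.lookup p (Poly_Mapping.single v 1) \<noteq> 0" for v
  proof -
    obtain i where "k = 1" "v = Inl (i, 0)"
      using I_W_lookup_linear[OF assms(1,5) linear] by auto
    moreover from this have "vanishes_to_order (d 0 - 1) (mpderiv i (f 0))"
      using assms(2) by (intro vanishes_to_order_mpderiv) (auto simp: in_Pi_def)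
    ultimately show ?thesis
      using assms(3,4) by (auto simp: F_map_def intro: vanishes_to_order_mono)
  qed
qed

lemma quot_dim_ge:
  assumes "\<And>B. finite B \<Longrightarrow> B \<subseteq> polyring V \<Longrightarrow> spans_mod V J B \<Longrightarrow> N \<le> card B"
  shows "enat N \<le> quot_dim V J"
proof (cases "\<exists>B. finite B \<and> B \<subseteq> polyring V \<and> spans_mod V J B")
  case True
  let ?P = "\<lambda>N. \<exists>B. finite B \<and> B \<subseteq> polyring V \<and> spans_mod V J B \<and> card B = N"
  from True obtain B0 where "finite B0" "B0 \<subseteq> polyring V" "spans_mod V J B0"
    by blast
  then have "?P (LEAST N. ?P N)"
    by (intro LeastI[of ?P "card B0"]) blast
  then obtain B where B: "finite B" "B \<subseteq> polyring V" "spans_mod V J B"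
    and card_B: "card B = (LEAST N. ?P N)"
    by blast
  have "N \<le> card B"
    by (rule assms[OF B])
  then show ?thesis
    using True card_B by (simp add: quot_dim_def)
next
  case False
  then have "quot_dim V J = \<infinity>"
    unfolding quot_dim_def by (simp only: if_False)
  then show ?thesis
    by simp
qed

text \<open>The classes of \<open>1\<close> and \<open>x\<^sub>v\<close> are independent modulo \<open>J\<close>: compare the coefficients of
  the monomials \<open>1\<close> and \<open>x\<^sub>v\<close>.\<close>

lemma card_spanning_set_ge_2:
  fixes J :: "'v mpoly set"
  assumes J: "\<And>q. q \<in> J \<Longrightarrow> vanishes_to_order 2 q"
    and "v \<in> V" "finite B" "spans_mod V J B"
  shows "2 \<le> card B"
proof (rule ccontr)
  let ?x = "Poly_Mapping.single v 1"
  assume "\<not> 2 \<le> card B"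
  then have "card B = 0 \<or> card B = 1"
    by linarith
  then have "B = {} \<or> (\<exists>b. B = {b})"
    using \<open>finite B\<close> card_1_singleton_iff[of B] by auto
  moreover obtain c1 where c1: "vanishes_to_order 2 (mconst 1 - (\<Sum>b\<in>B. mconst (c1 b) * b))"
    using assms(4) J unfolding spans_mod_def polyring_def by fastforce
  moreover obtain c2 where c2: "vanishes_to_order 2 (mvar v - (\<Sum>b\<in>B. mconst (c2 b) * b))"
    using assms(2,4) J unfolding spans_mod_def polyring_def by fastforce
  moreover have "\<not> vanishes_to_order 2 (mconst 1 :: 'v mpoly)"
    using lookup_eq_0_if_vanishes_to_order[of 2 "mconst 1 :: 'v mpoly" 0] by (force simp: lookup_mconst)
  ultimately obtain b where b: "B = {b}"
    by auto
  have "1 - c1 b * Poly_Mapping.lookup b 0 = 0"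
    using lookup_eq_0_if_vanishes_to_order[OF c1, of 0] b
    by (simp add: lookup_minus lookup_mconst_mult lookup_mconst)
  moreover have "0 - c1 b * Poly_Mapping.lookup b ?x = 0"
    using lookup_eq_0_if_vanishes_to_order[OF c1, of ?x] b
    by (simp add: lookup_minus lookup_mconst_mult lookup_mconst)
  moreover have "1 - c2 b * Poly_Mapping.lookup b ?x = 0"
    using lookup_eq_0_if_vanishes_to_order[OF c2, of ?x] b
    by (simp add: lookup_minus lookup_mconst_mult mvar_def)
  ultimately show False
    by auto
qed

theorem proposition9:
  fixes k n :: nat and d :: "nat \<Rightarrow> nat" and f :: "nat \<Rightarrow> nat mpoly"
  assumes "1 \<le> k" and "k \<le> n + 1"
    and "\<forall>j<k. 2 \<le> d j"
    and "\<forall>i j. i \<le> j \<longrightarrow> j < k \<longrightarrow> d i \<le> d j"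
    and "in_Pi k d n f" and "\<not> in_Sigma k n f"
    and "\<not> (k = 1 \<and> d 0 = 2)"
  shows "mult_N k n f > 1"
proof -
  let ?J = "gen_ideal {..n} (msubst (F_map f) ` I_W k n)"
  have "vanishes_to_order 2 g" if "g \<in> msubst (F_map f) ` I_W k n" for g
    using that vanishes_to_order_2_pullback_I_W[OF assms(1,5,3,7)] by blast
  then have "vanishes_to_order 2 q" if "q \<in> ?J" for q
    using that by (rule vanishes_to_order_gen_ideal)
  then have "2 \<le> card B" if "finite B" "spans_mod {..n} ?J B" for B
    using that by (intro card_spanning_set_ge_2[of ?J 0]) auto
  then have "enat 2 \<le> quot_dim {..n} ?J"
    by (rule quot_dim_ge)
  moreover have "1 < enat 2"
    by (simp add: one_enat_def)
  ultimately show ?thesis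
    unfolding mult_N_def by (rule order_less_le_trans[rotated])
qed

end
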